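(* Let $A$ be a block tridiagonal matrix satisfying the standing hypotheses (H), write $A^{-1}=[Z_{ij}]$ with $Z_{ij}\in\mathbb{C}^{m\times m}$, and let $\tau_{i,t},\omega_{i,t}$ be as in the context. Then for each $t=1,\dots,n-1$: $$\|Z_{ij}\|\le\|Z_{jj}\|\prod_{k=i}^{j-1}\tau_{k,t}\quad\text{for all } i<j,\qquad \|Z_{ij}\|\le\|Z_{jj}\|\prod_{k=j+1}^{i}\omega_{k,t}\quad\text{for all } i>j,$$ and for $i=1,\dots,n$, $$\frac{\|I\|}{\|A_i\|+\tau_{i-1,t}\|C_{i-1}\|+\omega_{i+1,t}\|B_i\|}\le\|Z_{ii}\|,$$ and, whenever $\|A_i^{-1}\|^{-1}-\tau_{i-1,t}\|C_{i-1}\|-\omega_{i+1,t}\|B_i\|>0$, $$\|Z_{ii}\|\le\frac{\|I\|}{\|A_i^{-1}\|^{-1}-\tau_{i-1,t}\|C_{i-1}\|-\omega_{i+1,t}\|B_i\|},$$ where $C_0=B_n=0$ and $\tau_{0,t}=\omega_{n+1,t}=0$.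
   Context: $\|\cdot\|$ is a submultiplicative matrix norm on $\mathbb{C}^{m\times m}$, $n\ge 2$, and $A$ is block tridiagonal with diagonal blocks $A_1,\dots,A_n$, superdiagonal blocks $B_1,\dots,B_{n-1}$ (block $(i,i+1)$) and subdiagonal blocks $C_1,\dots,C_{n-1}$ (block $(i+1,i)$), all in $\mathbb{C}^{m\times m}$; set $C_0=B_n=0$. Standing hypotheses (H): $A$ is nonsingular; $B_i$ and $C_i$ are nonsingular for $i=1,\dots,n-1$; every $A_i$ is nonsingular and $\|A_i^{-1}C_{i-1}\|+\|A_i^{-1}B_i\|\le 1$ for $i=1,\dots,n$ (row block diagonal dominance); and $\|A_1^{-1}B_1\|<1$, $\|A_n^{-1}C_{n-1}\|<1$. For $i=1,\dots,n$: $\tau_i=\dfrac{\|A_i^{-1}B_i\|}{1-\|A_i^{-1}C_{i-1}\|}$, $\omega_i=\dfrac{\|A_i^{-1}C_{i-1}\|}{1-\|A_i^{-1}B_i\|}$. For $i=1,\dots,n$ and $t=1,\dots,n-1$ define recursively in $t$: $\tau_{i,t}=\tau_i$ if $t=1$; $\tau_{i,t}=\tau_{i,t-1}$ if $t>i$; otherwise $\tau_{i,t}=\dfrac{\|A_i^{-1}B_i\|}{1-\|A_i^{-1}C_{i-1}\|\,\tau_{i-1,t-1}}$. $\omega_{i,t}=\omega_i$ if $t=1$; $\omega_{i,t}=\omega_{i,t-1}$ if $n-t+1<i$; otherwise $\omega_{i,t}=\dfrac{\|A_i^{-1}C_{i-1}\|}{1-\|A_i^{-1}B_i\|\,\omega_{i+1,t-1}}$.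 *)

theory Defs
  imports "HOL-Analysis.Analysis"
begin

type_synonym 'm cmat = "complex ^ 'm ^ 'm"

definition submult_matrix_norm :: "('m::finite cmat \<Rightarrow> real) \<Rightarrow> bool" where
  "submult_matrix_norm N \<longleftrightarrow>
     (\<forall>X. 0 \<le> N X) \<and> (\<forall>X. N X = 0 \<longleftrightarrow> X = 0) \<and>
     (\<forall>c X. N (\<chi> i j. c * X $ i $ j) = cmod c * N X) \<and>
     (\<forall>X Y. N (X + Y) \<le> N X + N Y) \<and>
     (\<forall>X Y. N (X ** Y) \<le> N X * N Y)"

definition tridiag_block ::
  "(nat \<Rightarrow> 'm::finite cmat) \<Rightarrow> (nat \<Rightarrow> 'm cmat) \<Rightarrow> (nat \<Rightarrow> 'm cmat) \<Rightarrow> nat \<Rightarrow> nat \<Rightarrow> 'm cmat" where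
  "tridiag_block Ad B C i j =
     (if i = j then Ad i else if j = i + 1 then B i else if i = j + 1 then C j else 0)"

definition is_block_inverse ::
  "nat \<Rightarrow> (nat \<Rightarrow> nat \<Rightarrow> 'm::finite cmat) \<Rightarrow> (nat \<Rightarrow> nat \<Rightarrow> 'm cmat) \<Rightarrow> bool" where
  "is_block_inverse n M Z \<longleftrightarrow>
     (\<forall>i\<in>{1..n}. \<forall>j\<in>{1..n}.
        (\<Sum>k=1..n. M i k ** Z k j) = (if i = j then mat 1 else 0) \<and>
        (\<Sum>k=1..n. Z i k ** M k j) = (if i = j then mat 1 else 0))"

fun tau_it ::
  "('m::finite cmat \<Rightarrow> real) \<Rightarrow> (nat \<Rightarrow> 'm cmat) \<Rightarrow> (nat \<Rightarrow> 'm cmat) \<Rightarrow> (nat \<Rightarrow> 'm cmat)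
   \<Rightarrow> nat \<Rightarrow> nat \<Rightarrow> real" where
  "tau_it N Ad B C i 0 = 0"
| "tau_it N Ad B C i (Suc t) =
     (if t = 0 then
        N (matrix_inv (Ad i) ** B i) / (1 - N (matrix_inv (Ad i) ** C (i - 1)))
      else if Suc t > i then tau_it N Ad B C i t
      else N (matrix_inv (Ad i) ** B i) /
             (1 - N (matrix_inv (Ad i) ** C (i - 1)) * tau_it N Ad B C (i - 1) t))"

fun omega_it ::
  "nat \<Rightarrow> ('m::finite cmat \<Rightarrow> real) \<Rightarrow> (nat \<Rightarrow> 'm cmat) \<Rightarrow> (nat \<Rightarrow> 'm cmat) \<Rightarrow> (nat \<Rightarrow> 'm cmat)
   \<Rightarrow> nat \<Rightarrow> nat \<Rightarrow> real" where
  "omega_it n N Ad B C i 0 = 0"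
| "omega_it n N Ad B C i (Suc t) =
     (if t = 0 then
        N (matrix_inv (Ad i) ** C (i - 1)) / (1 - N (matrix_inv (Ad i) ** B i))
      else if n - Suc t + 1 < i then omega_it n N Ad B C i t
      else N (matrix_inv (Ad i) ** C (i - 1)) /
             (1 - N (matrix_inv (Ad i) ** B i) * omega_it n N Ad B C (i + 1) t))"

end

theory Submission
  imports Defs
begin

text \<open>Row \<open>i\<close> of \<open>A Z = I\<close> reads
  \<open>C\<^sub>i\<^sub>-\<^sub>1 Z\<^sub>i\<^sub>-\<^sub>1\<^sub>,\<^sub>j + A\<^sub>i Z\<^sub>i\<^sub>j + B\<^sub>i Z\<^sub>i\<^sub>+\<^sub>1\<^sub>,\<^sub>j = \<delta>\<^sub>i\<^sub>j I\<close>, so off the diagonal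
  \<open>\<parallel>Z\<^sub>i\<^sub>j\<parallel> \<le> \<alpha>\<^sub>i \<parallel>Z\<^sub>i\<^sub>-\<^sub>1\<^sub>,\<^sub>j\<parallel> + \<beta>\<^sub>i \<parallel>Z\<^sub>i\<^sub>+\<^sub>1\<^sub>,\<^sub>j\<parallel>\<close> with
  \<open>\<alpha>\<^sub>i = \<parallel>A\<^sub>i\<^sup>-\<^sup>1C\<^sub>i\<^sub>-\<^sub>1\<parallel>\<close>, \<open>\<beta>\<^sub>i = \<parallel>A\<^sub>i\<^sup>-\<^sup>1B\<^sub>i\<parallel>\<close>. Above the diagonal, once a ratio
  \<open>\<parallel>Z\<^sub>i\<^sub>-\<^sub>1\<^sub>,\<^sub>j\<parallel> \<le> s \<parallel>Z\<^sub>i\<^sub>j\<parallel>\<close> is known, absorbing that term yields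
  \<open>\<parallel>Z\<^sub>i\<^sub>j\<parallel> \<le> \<beta>\<^sub>i/(1 - \<alpha>\<^sub>i s) \<parallel>Z\<^sub>i\<^sub>+\<^sub>1\<^sub>,\<^sub>j\<parallel>\<close>, and diagonal dominance keeps
  these ratios in \<open>[0,1]\<close>. The recursion defining \<open>\<tau>\<^sub>i\<^sub>,\<^sub>t\<close> is exactly this
  propagation, started from the crude ratio \<open>s = 1\<close>; below the diagonal the same works
  downwards and produces \<open>\<omega>\<^sub>i\<^sub>,\<^sub>t\<close>. Telescoping the ratios gives the product bounds,
  and inserting them for the two neighbours of \<open>Z\<^sub>i\<^sub>i\<close> into the diagonal row equation
  gives both bounds on \<open>\<parallel>Z\<^sub>i\<^sub>i\<parallel>\<close>.\<close>

lemma matrix_inv_left: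
  fixes A :: "'a::semiring_1^'n^'n"
  assumes "invertible A"
  shows "matrix_inv A ** A = mat 1"
  using someI_ex[OF assms[unfolded invertible_def]] unfolding matrix_inv_def by blast

lemma invertible_matrix_inv:
  fixes A :: "'a::semiring_1^'n^'n"
  assumes "invertible A"
  shows "invertible (matrix_inv A)"
  using someI_ex[OF assms[unfolded invertible_def]] unfolding matrix_inv_def invertible_def by blast

lemma invertible_nonzero:
  fixes A :: "'a::semiring_1^'n^'n"
  assumes "invertible A"
  shows "A \<noteq> 0"
proof
  assume "A = 0"
  with assms have "(mat 1 :: 'a^'n^'n) = 0"
    unfolding invertible_def by auto
  then have "(mat 1 :: 'a^'n^'n) $ undefined $ undefined = 0"
    by simp
  then show False
    by (simp add: mat_def)
qed

lemma matrix_mul_diff: "(A::'a::ring_1^'n^'m) ** (X - Y) = A ** X - A ** Y"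
  by (simp add: matrix_matrix_mult_def vec_eq_iff sum_subtractf algebra_simps)

lemma matrix_mul_uminus: "(A::'a::ring_1^'n^'m) ** (- X) = - (A ** X)"
  by (simp add: matrix_matrix_mult_def vec_eq_iff sum_negf)

lemma absorb_neighbour_bound:
  fixes a b s x y z :: real
  assumes "a * s < 1" "z \<le> a * y + b * x" "a * y \<le> a * s * z"
  shows "z \<le> b / (1 - a * s) * x"
proof -
  have "(1 - a * s) * z \<le> b * x"
    using assms(2,3) by (simp add: algebra_simps)
  with assms(1) show ?thesis
    by (simp add: pos_le_divide_eq mult.commute)
qed

lemma dominance_ratio_unit:
  fixes a b s :: real
  assumes "0 \<le> a" "0 \<le> b" "a + b \<le> 1" "a < 1" "0 \<le> s" "s \<le> 1"
  shows "0 \<le> b / (1 - a * s)" "b / (1 - a * s) \<le> 1"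
proof -
  have "a * s \<le> a"
    using assms by (simp add: mult_left_le)
  with assms show "0 \<le> b / (1 - a * s)" "b / (1 - a * s) \<le> 1"
    by simp_all
qed

lemma le_div_of_le_affine:
  fixes q c s z :: real
  assumes "0 < q" "z \<le> q * (c + s * z)" "0 < 1 / q - s"
  shows "z \<le> c / (1 / q - s)"
proof -
  have "(1 / q - s) * z \<le> c"
    using assms(1,2) by (simp add: pos_divide_le_eq algebra_simps mult.commute)
  with assms(3) show ?thesis
    by (simp add: pos_le_divide_eq mult.commute)
qed

lemma ratio_chain_forward:
  fixes x s :: "nat \<Rightarrow> real"
  assumes "i \<le> j"
    and "\<And>k. i \<le> k \<Longrightarrow> k < j \<Longrightarrow> x k \<le> s k * x (Suc k)"
    and "\<And>k. i \<le> k \<Longrightarrow> k < j \<Longrightarrow> 0 \<le> s k"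
  shows "x i \<le> x j * (\<Prod>k=i..<j. s k)"
  using assms(1)
proof (induction j rule: dec_induct)
  case (step m)
  have "0 \<le> (\<Prod>k=i..<m. s k)"
    using step.hyps assms(3) by (intro prod_nonneg) auto
  then have "x m * (\<Prod>k=i..<m. s k) \<le> s m * x (Suc m) * (\<Prod>k=i..<m. s k)"
    using step.hyps assms(2) by (intro mult_right_mono) auto
  with step.IH step.hyps show ?case
    by (simp add: prod.atLeastLessThan_Suc ac_simps)
qed simp

lemma ratio_chain_backward:
  fixes x s :: "nat \<Rightarrow> real"
  assumes "i \<le> j"
    and "\<And>k. i < k \<Longrightarrow> k \<le> j \<Longrightarrow> x k \<le> s k * x (k - 1)"
    and "\<And>k. i < k \<Longrightarrow> k \<le> j \<Longrightarrow> 0 \<le> s k"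
  shows "x j \<le> x i * (\<Prod>k=Suc i..j. s k)"
  using assms(1)
proof (induction j rule: dec_induct)
  case (step m)
  have "x (Suc m) \<le> s (Suc m) * x m"
    using step.hyps assms(2)[of "Suc m"] by simp
  also have "\<dots> \<le> s (Suc m) * (x i * (\<Prod>k=Suc i..m. s k))"
    using step.hyps step.IH assms(3) by (intro mult_left_mono) auto
  finally show ?case
    using step.hyps by (simp add: prod.nat_ivl_Suc' ac_simps)
qed simp

locale submult_norm =
  fixes N :: "'m::finite cmat \<Rightarrow> real"
  assumes submult: "submult_matrix_norm N"
begin

lemma nonneg: "0 \<le> N X"
  using submult unfolding submult_matrix_norm_def by blast

lemma zero [simp]: "N 0 = 0"
  using submult unfolding submult_matrix_norm_def by blast

lemma pos: "X \<noteq> 0 \<Longrightarrow> 0 < N X"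
  using submult unfolding submult_matrix_norm_def by (metis order_le_less)

lemma triangle: "N (X + Y) \<le> N X + N Y"
  using submult unfolding submult_matrix_norm_def by blast

lemma mult: "N (X ** Y) \<le> N X * N Y"
  using submult unfolding submult_matrix_norm_def by blast

lemma uminus: "N (- X) = N X"
proof -
  have "N (\<chi> i j. (-1) * X $ i $ j) = cmod (-1) * N X"
    using submult unfolding submult_matrix_norm_def by blast
  moreover have "(\<chi> i j. (-1) * X $ i $ j) = - X"
    by (simp add: vec_eq_iff)
  ultimately show ?thesis
    by simp
qed

lemma diff: "N (X - Y) \<le> N X + N Y"
  using triangle[of X "- Y"] by (simp add: uminus)

end

(* superseded by tau_it_Suc and omega_it_Suc, which are phrased in terms of \<alpha> and \<beta> *)
declare tau_it.simps(2) [simp del] omega_it.simps(2) [simp del]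

locale block_tridiagonal = submult_norm N for N :: "'m::finite cmat \<Rightarrow> real" +
  fixes n :: nat
    and Ad B C :: "nat \<Rightarrow> 'm cmat"
    and Z :: "nat \<Rightarrow> nat \<Rightarrow> 'm cmat"
  assumes C0: "C 0 = 0" and Bn: "B n = 0"
    and Zinv: "is_block_inverse n (tridiag_block Ad B C) Z"
    and BC_inv: "\<And>i. 1 \<le> i \<Longrightarrow> i \<le> n - 1 \<Longrightarrow> invertible (B i) \<and> invertible (C i)"
    and A_inv: "\<And>i. 1 \<le> i \<Longrightarrow> i \<le> n \<Longrightarrow> invertible (Ad i)"
    and dd: "\<And>i. 1 \<le> i \<Longrightarrow> i \<le> n \<Longrightarrow>
               N (matrix_inv (Ad i) ** C (i - 1)) + N (matrix_inv (Ad i) ** B i) \<le> 1"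
    and first: "N (matrix_inv (Ad 1) ** B 1) < 1"
    and last: "N (matrix_inv (Ad n) ** C (n - 1)) < 1"
begin

definition \<alpha> :: "nat \<Rightarrow> real" where "\<alpha> i = N (matrix_inv (Ad i) ** C (i - 1))"

definition \<beta> :: "nat \<Rightarrow> real" where "\<beta> i = N (matrix_inv (Ad i) ** B i)"

lemma \<alpha>_nonneg: "0 \<le> \<alpha> i"
  unfolding \<alpha>_def by (rule nonneg)

lemma \<beta>_nonneg: "0 \<le> \<beta> i"
  unfolding \<beta>_def by (rule nonneg)

lemma \<alpha>_first: "\<alpha> 1 = 0"
  unfolding \<alpha>_def by (simp add: C0)

lemma \<beta>_last: "\<beta> n = 0"
  unfolding \<beta>_def by (simp add: Bn)

lemma \<alpha>_\<beta>_le_one: "1 \<le> i \<Longrightarrow> i \<le> n \<Longrightarrow> \<alpha> i + \<beta> i \<le> 1"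
  unfolding \<alpha>_def \<beta>_def by (rule dd)

text \<open>At the ends these are hypotheses; elsewhere the other coupling is invertible,
  hence of positive norm, and dominance gives the strict bound.\<close>

lemma \<alpha>_less_one:
  assumes "1 \<le> i" "i \<le> n"
  shows "\<alpha> i < 1"
proof (cases "i = n")
  case True
  then show ?thesis
    using last unfolding \<alpha>_def by simp
next
  case False
  with assms have "invertible (matrix_inv (Ad i) ** B i)"
    using BC_inv[of i] A_inv[of i] by (simp add: invertible_mult invertible_matrix_inv)
  then have "0 < \<beta> i"
    unfolding \<beta>_def by (intro pos invertible_nonzero)
  with \<alpha>_\<beta>_le_one[OF assms] show ?thesis
    by simp
qed

lemma \<beta>_less_one:
  assumes "1 \<le> i" "i \<le> n"
  shows "\<beta> i < 1"
proof (cases "i = 1")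
  case True
  then show ?thesis
    using first unfolding \<beta>_def by simp
next
  case False
  with assms have "invertible (matrix_inv (Ad i) ** C (i - 1))"
    using BC_inv[of "i - 1"] A_inv[of i] by (simp add: invertible_mult invertible_matrix_inv)
  then have "0 < \<alpha> i"
    unfolding \<alpha>_def by (intro pos invertible_nonzero)
  with \<alpha>_\<beta>_le_one[OF assms] show ?thesis
    by simp
qed

lemma row_equation:
  assumes "1 \<le> i" "i \<le> n" "1 \<le> j" "j \<le> n"
  shows "C (i - 1) ** Z (i - 1) j + Ad i ** Z i j + B i ** Z (i + 1) j
           = (if i = j then mat 1 else 0)"
proof -
  have "(\<Sum>k=1..n. tridiag_block Ad B C i k ** Z k j)
      = (\<Sum>k=1..n. (if k = i then Ad i ** Z i j else 0) + (if k = i + 1 then B i ** Z (i + 1) j else 0)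
                    + (if k = i - 1 then C (i - 1) ** Z (i - 1) j else 0))"
    using assms by (intro sum.cong) (auto simp: tridiag_block_def)
  also have "\<dots> = C (i - 1) ** Z (i - 1) j + Ad i ** Z i j + B i ** Z (i + 1) j"
    using assms C0 Bn by (cases "i = n"; cases "i = 1"; auto simp: sum.distrib add_ac)
  finally show ?thesis
    using Zinv assms unfolding is_block_inverse_def by auto
qed

lemma block_solve:
  assumes "1 \<le> i" "i \<le> n" "1 \<le> j" "j \<le> n"
  shows "Z i j = matrix_inv (Ad i) **
           ((if i = j then mat 1 else 0) - C (i - 1) ** Z (i - 1) j - B i ** Z (i + 1) j)"
proof -
  have "Z i j = matrix_inv (Ad i) ** (Ad i ** Z i j)"
    using A_inv[OF assms(1,2)] by (simp add: matrix_mul_assoc matrix_inv_left)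
  also have "Ad i ** Z i j = (if i = j then mat 1 else 0) - C (i - 1) ** Z (i - 1) j - B i ** Z (i + 1) j"
    using row_equation[OF assms] by (simp add: algebra_simps)
  finally show ?thesis .
qed

lemma offdiag_recursion:
  assumes "1 \<le> i" "i \<le> n" "1 \<le> j" "j \<le> n" "i \<noteq> j"
  shows "N (Z i j) \<le> \<alpha> i * N (Z (i - 1) j) + \<beta> i * N (Z (i + 1) j)"
proof -
  let ?P = "(matrix_inv (Ad i) ** C (i - 1)) ** Z (i - 1) j"
  let ?Q = "(matrix_inv (Ad i) ** B i) ** Z (i + 1) j"
  have "Z i j = - ?P - ?Q"
    using block_solve[OF assms(1-4)] assms(5)
    by (simp add: matrix_mul_diff matrix_mul_uminus matrix_mul_assoc)
  then have "N (Z i j) \<le> N ?P + N ?Q"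
    using diff[of "- ?P" ?Q] by (simp add: uminus)
  also have "\<dots> \<le> \<alpha> i * N (Z (i - 1) j) + \<beta> i * N (Z (i + 1) j)"
    unfolding \<alpha>_def \<beta>_def by (intro add_mono mult)
  finally show ?thesis .
qed

lemma diag_lower:
  assumes "1 \<le> i" "i \<le> n"
  shows "N (mat 1) \<le> N (C (i - 1)) * N (Z (i - 1) i) + N (Ad i) * N (Z i i) + N (B i) * N (Z (i + 1) i)"
proof -
  have "N (mat 1) = N (C (i - 1) ** Z (i - 1) i + Ad i ** Z i i + B i ** Z (i + 1) i)"
    using row_equation[OF assms assms] by simp
  also have "\<dots> \<le> N (C (i - 1) ** Z (i - 1) i + Ad i ** Z i i) + N (B i ** Z (i + 1) i)"
    by (rule triangle)
  also have "\<dots> \<le> N (C (i - 1) ** Z (i - 1) i) + N (Ad i ** Z i i) + N (B i ** Z (i + 1) i)"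
    by (intro add_right_mono triangle)
  also have "\<dots> \<le> N (C (i - 1)) * N (Z (i - 1) i) + N (Ad i) * N (Z i i) + N (B i) * N (Z (i + 1) i)"
    by (intro add_mono mult)
  finally show ?thesis .
qed

lemma diag_upper:
  assumes "1 \<le> i" "i \<le> n"
  shows "N (Z i i) \<le> N (matrix_inv (Ad i)) *
           (N (mat 1) + N (C (i - 1)) * N (Z (i - 1) i) + N (B i) * N (Z (i + 1) i))"
proof -
  have "N (Z i i) \<le> N (matrix_inv (Ad i)) * N (mat 1 - C (i - 1) ** Z (i - 1) i - B i ** Z (i + 1) i)"
    by (subst block_solve[OF assms assms]) (simp add: mult)
  also have "\<dots> \<le> N (matrix_inv (Ad i)) *
           (N (mat 1) + N (C (i - 1) ** Z (i - 1) i) + N (B i ** Z (i + 1) i))"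
    by (intro mult_left_mono nonneg order_trans[OF diff] add_right_mono diff)
  also have "\<dots> \<le> N (matrix_inv (Ad i)) *
           (N (mat 1) + N (C (i - 1)) * N (Z (i - 1) i) + N (B i) * N (Z (i + 1) i))"
    by (intro mult_left_mono nonneg add_mono mult order_refl)
  finally show ?thesis .
qed

lemma tau_it_Suc:
  "tau_it N Ad B C i (Suc t) =
     (if t = 0 then \<beta> i / (1 - \<alpha> i)
      else if i < Suc t then tau_it N Ad B C i t
      else \<beta> i / (1 - \<alpha> i * tau_it N Ad B C (i - 1) t))"
  by (simp add: \<alpha>_def \<beta>_def tau_it.simps)

lemma omega_it_Suc:
  "omega_it n N Ad B C i (Suc t) =
     (if t = 0 then \<alpha> i / (1 - \<beta> i)
      else if n - Suc t + 1 < i then omega_it n N Ad B C i t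
      else \<alpha> i / (1 - \<beta> i * omega_it n N Ad B C (i + 1) t))"
  by (simp add: \<alpha>_def \<beta>_def omega_it.simps)

lemma tau_it_one: "tau_it N Ad B C i 1 = \<beta> i / (1 - \<alpha> i)"
  using tau_it_Suc[of i 0] by simp

lemma omega_it_one: "omega_it n N Ad B C i 1 = \<alpha> i / (1 - \<beta> i)"
  using omega_it_Suc[of i 0] by simp

lemma tau_it_unit:
  "1 \<le> t \<Longrightarrow> 1 \<le> i \<Longrightarrow> i \<le> n \<Longrightarrow> 0 \<le> tau_it N Ad B C i t \<and> tau_it N Ad B C i t \<le> 1"
proof (induction t arbitrary: i)
  case (Suc t)
  have ratio: "0 \<le> \<beta> i / (1 - \<alpha> i * s) \<and> \<beta> i / (1 - \<alpha> i * s) \<le> 1" if "0 \<le> s" "s \<le> 1" for s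
    using dominance_ratio_unit[OF \<alpha>_nonneg \<beta>_nonneg _ _ that] Suc.prems
      \<alpha>_\<beta>_le_one \<alpha>_less_one by simp
  consider "t = 0" | "t \<noteq> 0" "i < Suc t" | "t \<noteq> 0" "\<not> i < Suc t"
    by blast
  then show ?case
  proof cases
    case 1
    then show ?thesis
      using ratio[of 1] by (simp add: tau_it_Suc)
  next
    case 2
    then show ?thesis
      using Suc by (simp add: tau_it_Suc)
  next
    case 3
    then show ?thesis
      using Suc.IH[of "i - 1"] Suc.prems ratio by (simp add: tau_it_Suc)
  qed
qed simp

lemma omega_it_unit:
  "1 \<le> t \<Longrightarrow> t \<le> n - 1 \<Longrightarrow> 1 \<le> i \<Longrightarrow> i \<le> n \<Longrightarrow>
     0 \<le> omega_it n N Ad B C i t \<and> omega_it n N Ad B C i t \<le> 1"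
proof (induction t arbitrary: i)
  case (Suc t)
  have ratio: "0 \<le> \<alpha> i / (1 - \<beta> i * s) \<and> \<alpha> i / (1 - \<beta> i * s) \<le> 1" if "0 \<le> s" "s \<le> 1" for s
    using dominance_ratio_unit[OF \<beta>_nonneg \<alpha>_nonneg _ _ that] Suc.prems
      \<alpha>_\<beta>_le_one \<beta>_less_one by (simp add: add.commute)
  consider "t = 0" | "t \<noteq> 0" "n - Suc t + 1 < i" | "t \<noteq> 0" "\<not> n - Suc t + 1 < i"
    by blast
  then show ?case
  proof cases
    case 1
    then show ?thesis
      using ratio[of 1] by (simp add: omega_it_Suc)
  next
    case 2
    then show ?thesis
      using Suc by (simp add: omega_it_Suc)
  next
    case 3
    then show ?thesis
      using Suc.IH[of "i + 1"] Suc.prems ratio by (simp add: omega_it_Suc)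
  qed
qed simp

definition decays_above :: "real \<Rightarrow> nat \<Rightarrow> bool" where
  "decays_above s i \<longleftrightarrow> (\<forall>j. i < j \<and> j \<le> n \<longrightarrow> N (Z i j) \<le> s * N (Z (i + 1) j))"

definition decays_below :: "real \<Rightarrow> nat \<Rightarrow> bool" where
  "decays_below s i \<longleftrightarrow> (\<forall>j. 1 \<le> j \<and> j < i \<longrightarrow> N (Z i j) \<le> s * N (Z (i - 1) j))"

lemma decays_above_mono: "decays_above s i \<Longrightarrow> s \<le> s' \<Longrightarrow> decays_above s' i"
  unfolding decays_above_def by (meson mult_right_mono nonneg order_trans)

lemma decays_below_mono: "decays_below s i \<Longrightarrow> s \<le> s' \<Longrightarrow> decays_below s' i"
  unfolding decays_below_def by (meson mult_right_mono nonneg order_trans)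

lemma decays_above_step:
  assumes "1 \<le> i" "i \<le> n" "0 \<le> s" "s \<le> 1" "i = 1 \<or> decays_above s (i - 1)"
  shows "decays_above (\<beta> i / (1 - \<alpha> i * s)) i"
  unfolding decays_above_def
proof (intro allI impI, elim conjE)
  fix j
  assume j: "i < j" "j \<le> n"
  have "\<alpha> i * s \<le> \<alpha> i"
    using assms(3,4) \<alpha>_nonneg by (simp add: mult_left_le)
  with \<alpha>_less_one[OF assms(1,2)] have "\<alpha> i * s < 1"
    by simp
  moreover from assms(5) have "\<alpha> i * N (Z (i - 1) j) \<le> \<alpha> i * s * N (Z i j)"
  proof
    assume "i = 1"
    then have "\<alpha> i = 0"
      using \<alpha>_first by metis
    then show ?thesis
      by simp
  next
    assume "decays_above s (i - 1)"
    then have "N (Z (i - 1) j) \<le> s * N (Z i j)"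
      using j assms(1) unfolding decays_above_def by (metis le_add_diff_inverse2 less_imp_diff_less)
    then show ?thesis
      using \<alpha>_nonneg by (simp add: mult_left_mono mult.assoc)
  qed
  ultimately show "N (Z i j) \<le> \<beta> i / (1 - \<alpha> i * s) * N (Z (i + 1) j)"
    using absorb_neighbour_bound offdiag_recursion[of i j] assms(1,2) j by simp
qed

lemma decays_below_step:
  assumes "1 \<le> i" "i \<le> n" "0 \<le> s" "s \<le> 1" "i = n \<or> decays_below s (i + 1)"
  shows "decays_below (\<alpha> i / (1 - \<beta> i * s)) i"
  unfolding decays_below_def
proof (intro allI impI, elim conjE)
  fix j
  assume j: "1 \<le> j" "j < i"
  have "\<beta> i * s \<le> \<beta> i"
    using assms(3,4) \<beta>_nonneg by (simp add: mult_left_le)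
  with \<beta>_less_one[OF assms(1,2)] have "\<beta> i * s < 1"
    by simp
  moreover from assms(5) have "\<beta> i * N (Z (i + 1) j) \<le> \<beta> i * s * N (Z i j)"
  proof
    assume "i = n"
    then have "\<beta> i = 0"
      using \<beta>_last by metis
    then show ?thesis
      by simp
  next
    assume "decays_below s (i + 1)"
    then have "N (Z (i + 1) j) \<le> s * N (Z i j)"
      using j unfolding decays_below_def by simp
    then show ?thesis
      using \<beta>_nonneg by (simp add: mult_left_mono mult.assoc)
  qed
  moreover have "N (Z i j) \<le> \<beta> i * N (Z (i + 1) j) + \<alpha> i * N (Z (i - 1) j)"
    using offdiag_recursion[of i j] assms(1,2) j by simp
  ultimately show "N (Z i j) \<le> \<alpha> i / (1 - \<beta> i * s) * N (Z (i - 1) j)"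
    using absorb_neighbour_bound by simp
qed

lemma decays_above_tau_first:
  "1 \<le> i \<Longrightarrow> i \<le> n \<Longrightarrow> decays_above (tau_it N Ad B C i 1) i"
proof (induction i)
  case (Suc m)
  have "Suc m = 1 \<or> decays_above 1 m"
  proof (cases "m = 0")
    case False
    with Suc show ?thesis
      using decays_above_mono tau_it_unit[of 1 m] by auto
  qed simp
  then show ?case
    unfolding tau_it_one using decays_above_step[of "Suc m" 1] Suc.prems by simp
qed simp

lemma decays_below_omega_first:
  "1 \<le> i \<Longrightarrow> i \<le> n \<Longrightarrow> decays_below (omega_it n N Ad B C i 1) i"
proof (induction "n - i" arbitrary: i)
  case 0
  then show ?case
    unfolding omega_it_one using decays_below_step[of i 1] by simp
next
  case (Suc k)
  have "i + 1 \<le> n" "k = n - (i + 1)"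
    using Suc by arith+
  then have "decays_below (omega_it n N Ad B C (i + 1) 1) (i + 1)"
    using Suc by simp
  moreover have "omega_it n N Ad B C (i + 1) 1 \<le> 1"
    using omega_it_unit[of 1 "i + 1"] \<open>i + 1 \<le> n\<close> Suc.prems by simp
  ultimately have "decays_below 1 (i + 1)"
    by (rule decays_below_mono)
  then show ?case
    unfolding omega_it_one using decays_below_step[of i 1] Suc.prems by simp
qed

lemma decays_above_tau:
  "1 \<le> t \<Longrightarrow> 1 \<le> i \<Longrightarrow> i \<le> n \<Longrightarrow> decays_above (tau_it N Ad B C i t) i"
proof (induction t arbitrary: i)
  case (Suc t)
  consider "t = 0" | "t \<noteq> 0" "i < Suc t" | "t \<noteq> 0" "\<not> i < Suc t"
    by blast
  then show ?case
  proof cases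
    case 1
    then show ?thesis
      using decays_above_tau_first Suc.prems by simp
  next
    case 2
    then show ?thesis
      using Suc by (simp add: tau_it_Suc)
  next
    case 3
    then show ?thesis
      using decays_above_step[of i "tau_it N Ad B C (i - 1) t"] Suc.IH[of "i - 1"]
        tau_it_unit[of t "i - 1"] Suc.prems
      by (simp add: tau_it_Suc)
  qed
qed simp

lemma decays_below_omega:
  "1 \<le> t \<Longrightarrow> t \<le> n - 1 \<Longrightarrow> 1 \<le> i \<Longrightarrow> i \<le> n \<Longrightarrow> decays_below (omega_it n N Ad B C i t) i"
proof (induction t arbitrary: i)
  case (Suc t)
  consider "t = 0" | "t \<noteq> 0" "n - Suc t + 1 < i" | "t \<noteq> 0" "\<not> n - Suc t + 1 < i"
    by blast
  then show ?case
  proof cases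
    case 1
    then show ?thesis
      using decays_below_omega_first Suc.prems by simp
  next
    case 2
    then show ?thesis
      using Suc by (simp add: omega_it_Suc)
  next
    case 3
    then show ?thesis
      using decays_below_step[of i "omega_it n N Ad B C (i + 1) t"] Suc.IH[of "i + 1"]
        omega_it_unit[of t "i + 1"] Suc.prems
      by (simp add: omega_it_Suc)
  qed
qed simp

lemma upper_block_bound:
  assumes "1 \<le> t" "1 \<le> i" "i < j" "j \<le> n"
  shows "N (Z i j) \<le> N (Z j j) * (\<Prod>k=i..j-1. tau_it N Ad B C k t)"
proof -
  have "N (Z i j) \<le> N (Z j j) * (\<Prod>k=i..<j. tau_it N Ad B C k t)"
  proof (rule ratio_chain_forward)
    fix k
    assume "i \<le> k" "k < j"
    with assms show "N (Z k j) \<le> tau_it N Ad B C k t * N (Z (Suc k) j)"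
      using decays_above_tau[of t k] unfolding decays_above_def by simp
    show "0 \<le> tau_it N Ad B C k t"
      using tau_it_unit[of t k] assms \<open>i \<le> k\<close> \<open>k < j\<close> by simp
  qed (use assms in simp)
  moreover have "{i..<j} = {i..j-1}"
    using assms(3) by auto
  ultimately show ?thesis
    by simp
qed

lemma lower_block_bound:
  assumes "1 \<le> t" "t \<le> n - 1" "1 \<le> j" "j < i" "i \<le> n"
  shows "N (Z i j) \<le> N (Z j j) * (\<Prod>k=j+1..i. omega_it n N Ad B C k t)"
proof -
  have "N (Z i j) \<le> N (Z j j) * (\<Prod>k=Suc j..i. omega_it n N Ad B C k t)"
  proof (rule ratio_chain_backward)
    fix k
    assume "j < k" "k \<le> i"
    with assms show "N (Z k j) \<le> omega_it n N Ad B C k t * N (Z (k - 1) j)"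
      using decays_below_omega[of t k] unfolding decays_below_def by simp
    show "0 \<le> omega_it n N Ad B C k t"
      using omega_it_unit[of t k] assms \<open>j < k\<close> \<open>k \<le> i\<close> by simp
  qed (use assms in simp)
  then show ?thesis
    by simp
qed

text \<open>The paper's conventions \<open>\<tau>\<^sub>0\<^sub>,\<^sub>t = \<omega>\<^sub>n\<^sub>+\<^sub>1\<^sub>,\<^sub>t = 0\<close>.\<close>

definition tau_prev :: "nat \<Rightarrow> nat \<Rightarrow> real" where
  "tau_prev t i = (if i = 1 then 0 else tau_it N Ad B C (i - 1) t)"

definition omega_next :: "nat \<Rightarrow> nat \<Rightarrow> real" where
  "omega_next t i = (if i = n then 0 else omega_it n N Ad B C (i + 1) t)"

lemma coupling_above:
  assumes "1 \<le> t" "1 \<le> i" "i \<le> n"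
  shows "0 \<le> tau_prev t i"
    and "N (C (i - 1)) * N (Z (i - 1) i) \<le> tau_prev t i * N (C (i - 1)) * N (Z i i)"
proof -
  show "0 \<le> tau_prev t i"
    unfolding tau_prev_def using tau_it_unit[of t "i - 1"] assms by simp
  show "N (C (i - 1)) * N (Z (i - 1) i) \<le> tau_prev t i * N (C (i - 1)) * N (Z i i)"
  proof (cases "i = 1")
    case False
    then have "N (Z (i - 1) i) \<le> tau_prev t i * N (Z i i)"
      unfolding tau_prev_def using decays_above_tau[of t "i - 1"] assms
      unfolding decays_above_def by simp
    then show ?thesis
      using nonneg by (metis mult.assoc mult.commute mult_left_mono)
  qed (simp add: C0)
qed

lemma coupling_below:
  assumes "1 \<le> t" "t \<le> n - 1" "1 \<le> i" "i \<le> n"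
  shows "0 \<le> omega_next t i"
    and "N (B i) * N (Z (i + 1) i) \<le> omega_next t i * N (B i) * N (Z i i)"
proof -
  show "0 \<le> omega_next t i"
    unfolding omega_next_def using omega_it_unit[of t "i + 1"] assms by simp
  show "N (B i) * N (Z (i + 1) i) \<le> omega_next t i * N (B i) * N (Z i i)"
  proof (cases "i = n")
    case False
    then have "N (Z (i + 1) i) \<le> omega_next t i * N (Z i i)"
      unfolding omega_next_def using decays_below_omega[of t "i + 1"] assms
      unfolding decays_below_def by simp
    then show ?thesis
      using nonneg by (metis mult.assoc mult.commute mult_left_mono)
  qed (simp add: Bn)
qed

lemma diag_block_lower_bound:
  assumes "1 \<le> t" "t \<le> n - 1" "1 \<le> i" "i \<le> n"
  shows "N (mat 1) / (N (Ad i) + tau_prev t i * N (C (i - 1)) + omega_next t i * N (B i))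
           \<le> N (Z i i)"
proof -
  have "N (mat 1) \<le> (N (Ad i) + tau_prev t i * N (C (i - 1)) + omega_next t i * N (B i)) * N (Z i i)"
    using diag_lower[OF assms(3,4)] coupling_above[OF assms(1,3,4)] coupling_below[OF assms]
    by (simp add: algebra_simps)
  moreover have "0 < N (Ad i)"
    using A_inv[OF assms(3,4)] by (intro pos invertible_nonzero)
  then have "0 < N (Ad i) + tau_prev t i * N (C (i - 1)) + omega_next t i * N (B i)"
    using coupling_above[OF assms(1,3,4)] coupling_below[OF assms] nonneg
    by (simp add: add_pos_nonneg)
  ultimately show ?thesis
    by (simp add: pos_divide_le_eq mult.commute)
qed

lemma diag_block_upper_bound:
  assumes "1 \<le> t" "t \<le> n - 1" "1 \<le> i" "i \<le> n"
    and "0 < 1 / N (matrix_inv (Ad i)) - tau_prev t i * N (C (i - 1)) - omega_next t i * N (B i)"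
  shows "N (Z i i) \<le> N (mat 1) /
           (1 / N (matrix_inv (Ad i)) - tau_prev t i * N (C (i - 1)) - omega_next t i * N (B i))"
proof -
  let ?s = "tau_prev t i * N (C (i - 1)) + omega_next t i * N (B i)"
  have "0 < N (matrix_inv (Ad i))"
    using A_inv[OF assms(3,4)] by (intro pos invertible_nonzero invertible_matrix_inv)
  moreover have "N (Z i i) \<le> N (matrix_inv (Ad i)) * (N (mat 1) + ?s * N (Z i i))"
  proof -
    have "N (Z i i) \<le> N (matrix_inv (Ad i)) *
            (N (mat 1) + N (C (i - 1)) * N (Z (i - 1) i) + N (B i) * N (Z (i + 1) i))"
      by (rule diag_upper[OF assms(3,4)])
    also have "\<dots> \<le> N (matrix_inv (Ad i)) * (N (mat 1) + ?s * N (Z i i))"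
      using coupling_above(2)[OF assms(1,3,4)] coupling_below(2)[OF assms(1-4)]
      by (intro mult_left_mono nonneg) (simp add: algebra_simps)
    finally show ?thesis .
  qed
  ultimately show ?thesis
    using le_div_of_le_affine assms(5) by (simp add: diff_diff_eq)
qed

end

theorem theorem2p7:
  fixes N :: "'m::finite cmat \<Rightarrow> real"
    and n :: nat
    and Ad B C :: "nat \<Rightarrow> 'm cmat"
    and Z :: "nat \<Rightarrow> nat \<Rightarrow> 'm cmat"
  assumes norm: "submult_matrix_norm N"
    and n2: "n \<ge> 2"
    and C0: "C 0 = 0" and Bn: "B n = 0"
    and Zinv: "is_block_inverse n (tridiag_block Ad B C) Z"
    and BC_inv: "\<And>i. 1 \<le> i \<Longrightarrow> i \<le> n - 1 \<Longrightarrow> invertible (B i) \<and> invertible (C i)"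
    and A_inv: "\<And>i. 1 \<le> i \<Longrightarrow> i \<le> n \<Longrightarrow> invertible (Ad i)"
    and dd: "\<And>i. 1 \<le> i \<Longrightarrow> i \<le> n \<Longrightarrow>
               N (matrix_inv (Ad i) ** C (i - 1)) + N (matrix_inv (Ad i) ** B i) \<le> 1"
    and first: "N (matrix_inv (Ad 1) ** B 1) < 1"
    and last: "N (matrix_inv (Ad n) ** C (n - 1)) < 1"
    and t: "1 \<le> t" "t \<le> n - 1"
  shows "(\<forall>i j. 1 \<le> i \<and> i < j \<and> j \<le> n \<longrightarrow>
            N (Z i j) \<le> N (Z j j) * (\<Prod>k=i..j-1. tau_it N Ad B C k t))
       \<and> (\<forall>i j. 1 \<le> j \<and> j < i \<and> i \<le> n \<longrightarrow>
            N (Z i j) \<le> N (Z j j) * (\<Prod>k=j+1..i. omega_it n N Ad B C k t))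
       \<and> (\<forall>i. 1 \<le> i \<and> i \<le> n \<longrightarrow>
            (let tp = (if i = 1 then 0 else tau_it N Ad B C (i - 1) t);
                 om = (if i = n then 0 else omega_it n N Ad B C (i + 1) t)
             in N (mat 1) / (N (Ad i) + tp * N (C (i - 1)) + om * N (B i)) \<le> N (Z i i)
              \<and> (1 / N (matrix_inv (Ad i)) - tp * N (C (i - 1)) - om * N (B i) > 0 \<longrightarrow>
                  N (Z i i) \<le> N (mat 1) /
                     (1 / N (matrix_inv (Ad i)) - tp * N (C (i - 1)) - om * N (B i)))))"
proof -
  interpret block_tridiagonal N n Ad B C Z
    using norm C0 Bn Zinv BC_inv A_inv dd first last by unfold_locales
  show ?thesis
    unfolding Let_def tau_prev_def [symmetric] omega_next_def [symmetric]
    using upper_block_bound[OF t(1)] lower_block_bound[OF t]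
      diag_block_lower_bound[OF t] diag_block_upper_bound[OF t]
    by blast
qed

end
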